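(* Let $L=\langle S,A,\to\rangle$ be a labelled transition system and $x,y\in\{o,b\}$. Then $(x,y)$-generic bisimilarity $\mathrel{\underline{\leftrightarrow}}_{(x,y)}$ is an equivalence relation on $S$.
   Context: An LTS is $\langle S,A,\to\rangle$ with states $S$, actions $A$ containing the internal action $\tau$, and $\to\subseteq S\times A\times S$; write $s\xrightarrow{a}t$, and $\twoheadrightarrow$ for the reflexive-transitive closure of $\xrightarrow{\tau}$. For $R\subseteq S\times S$ and $s,s',t$: $s\twoheadrightarrow_{o,R,t}s'$ iff $s\twoheadrightarrow s'$; $s\twoheadrightarrow_{b,R,t}s'$ iff $s\twoheadrightarrow s'$, $t\,R\,s$ and $t\,R\,s'$. For $x,y\in\{o,b\}$, a symmetric $R$ is an $(x,y)$-generic bisimulation if whenever $s\,R\,t$ and $s\xrightarrow{a}s'$, either $a=\tau$ and $s'\,R\,t$, or there exist $t',t_1,t_2$ with $t\twoheadrightarrow_{x,R,s}t_1\xrightarrow{a}t_2\twoheadrightarrow_{y,R,s'}t'$ and $s'\,R\,t'$. $s\mathrel{\underline{\leftrightarrow}}_{(x,y)}t$ iff some $(x,y)$-generic bisimulation relates $s$ and $t$. *)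

theory Defs
  imports Main
begin

datatype mode = Mo | Mb

definition tau_steps :: "('s \<Rightarrow> 'a \<Rightarrow> 's \<Rightarrow> bool) \<Rightarrow> 'a \<Rightarrow> 's \<Rightarrow> 's \<Rightarrow> bool" where
  "tau_steps tr tau = (\<lambda>s s'. tr s tau s')\<^sup>*\<^sup>*"

fun mstep :: "('s \<Rightarrow> 'a \<Rightarrow> 's \<Rightarrow> bool) \<Rightarrow> 'a \<Rightarrow> mode \<Rightarrow> ('s \<Rightarrow> 's \<Rightarrow> bool) \<Rightarrow> 's \<Rightarrow> 's \<Rightarrow> 's \<Rightarrow> bool" where
  "mstep tr tau Mo R t s s' = tau_steps tr tau s s'"
| "mstep tr tau Mb R t s s' = (tau_steps tr tau s s' \<and> R t s \<and> R t s')"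

definition generic_bisim :: "('s \<Rightarrow> 'a \<Rightarrow> 's \<Rightarrow> bool) \<Rightarrow> 'a \<Rightarrow> mode \<Rightarrow> mode \<Rightarrow> ('s \<Rightarrow> 's \<Rightarrow> bool) \<Rightarrow> bool" where
  "generic_bisim tr tau x y R \<longleftrightarrow>
     symp R \<and>
     (\<forall>s t a s'. R s t \<and> tr s a s' \<longrightarrow>
        (a = tau \<and> R s' t) \<or>
        (\<exists>t' t1 t2. mstep tr tau x R s t t1 \<and> tr t1 a t2 \<and> mstep tr tau y R s' t2 t' \<and> R s' t'))"

definition generic_bisimilar :: "('s \<Rightarrow> 'a \<Rightarrow> 's \<Rightarrow> bool) \<Rightarrow> 'a \<Rightarrow> mode \<Rightarrow> mode \<Rightarrow> 's \<Rightarrow> 's \<Rightarrow> bool" where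
  "generic_bisimilar tr tau x y s t \<longleftrightarrow> (\<exists>R. generic_bisim tr tau x y R \<and> R s t)"

end

theory Submission
  imports Defs
begin

text \<open>Following Basten's treatment of branching bisimilarity, relax the \<open>\<tau>\<close>-clause: a \<open>\<tau>\<close>-step
  of \<open>s\<close> may be answered by any \<open>\<tau>\<close>-path of \<open>t\<close> (of mode \<open>x\<close>) ending in a state related to the
  target. Such semi-bisimulations are closed under relational composition, because they can be
  transported along \<open>\<tau>\<close>-paths; hence their union, semi-bisimilarity, is an equivalence. Every
  generic bisimulation is a semi-bisimulation, and conversely semi-bisimilarity is itself a generic
  bisimulation: a \<open>\<tau>\<close>-answer along a non-empty path is turned into an ordinary answer whose final
  \<open>\<tau>\<close>-step is the matching step, the states passed on the way being related by stuttering.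
  So generic bisimilarity equals semi-bisimilarity.\<close>

context
  fixes tr :: "'s \<Rightarrow> 'a \<Rightarrow> 's \<Rightarrow> bool" and tau :: 'a
begin

lemma tau_steps_refl: "tau_steps tr tau s s"
  by (simp add: tau_steps_def)

lemma tau_steps_trans: "tau_steps tr tau s u \<Longrightarrow> tau_steps tr tau u v \<Longrightarrow> tau_steps tr tau s v"
  unfolding tau_steps_def by (rule rtranclp_trans)

lemma tau_steps_step: "tr s tau u \<Longrightarrow> tau_steps tr tau s u"
  unfolding tau_steps_def by (rule r_into_rtranclp)

lemma mstep_tau_steps: "mstep tr tau m R s t t' \<Longrightarrow> tau_steps tr tau t t'"
  by (cases m) auto

lemma mstep_Mb_related: "mstep tr tau Mb R s t t' \<Longrightarrow> R s t \<and> R s t'"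
  by simp

lemma mstepI: "tau_steps tr tau t t' \<Longrightarrow> (m = Mb \<Longrightarrow> R s t \<and> R s t') \<Longrightarrow> mstep tr tau m R s t t'"
  by (cases m) auto

lemma mstep_mono: "mstep tr tau m R s t t' \<Longrightarrow> R \<le> R' \<Longrightarrow> mstep tr tau m R' s t t'"
  by (cases m) auto

lemma mstep_relcompp:
  "mstep tr tau m R s u u' \<Longrightarrow> tau_steps tr tau t t' \<Longrightarrow> (m = Mb \<Longrightarrow> R u t \<and> R u' t')
    \<Longrightarrow> mstep tr tau m (R OO R) s t t'"
  by (cases m) auto

definition semi_bisim :: "mode \<Rightarrow> mode \<Rightarrow> ('s \<Rightarrow> 's \<Rightarrow> bool) \<Rightarrow> bool" where
  "semi_bisim x y R \<longleftrightarrow>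
     symp R \<and>
     (\<forall>s t a s'. R s t \<and> tr s a s' \<longrightarrow>
        (a = tau \<and> (\<exists>t1. mstep tr tau x R s t t1 \<and> R s' t1)) \<or>
        (\<exists>t' t1 t2. mstep tr tau x R s t t1 \<and> tr t1 a t2 \<and> mstep tr tau y R s' t2 t' \<and> R s' t'))"

definition semi_bisimilar :: "mode \<Rightarrow> mode \<Rightarrow> 's \<Rightarrow> 's \<Rightarrow> bool" where
  "semi_bisimilar x y s t \<longleftrightarrow> (\<exists>R. semi_bisim x y R \<and> R s t)"

lemma semi_bisimI:
  assumes "symp R"
    and "\<And>s t a s'. R s t \<Longrightarrow> tr s a s' \<Longrightarrow>
      (a = tau \<and> (\<exists>t1. mstep tr tau x R s t t1 \<and> R s' t1)) \<or>
      (\<exists>t' t1 t2. mstep tr tau x R s t t1 \<and> tr t1 a t2 \<and> mstep tr tau y R s' t2 t' \<and> R s' t')"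
  shows "semi_bisim x y R"
  using assms unfolding semi_bisim_def by blast

lemma semi_bisimE[consumes 3, case_names tau step]:
  assumes "semi_bisim x y R" "R s t" "tr s a s'"
  obtains (tau) t1 where "a = tau" "mstep tr tau x R s t t1" "R s' t1"
  | (step) t' t1 t2 where "mstep tr tau x R s t t1" "tr t1 a t2" "mstep tr tau y R s' t2 t'" "R s' t'"
  using assms unfolding semi_bisim_def by blast

lemma semi_bisim_sym: "semi_bisim x y R \<Longrightarrow> R s t \<Longrightarrow> R t s"
  unfolding semi_bisim_def by (blast dest: sympD)

lemma semi_bisim_tau_steps:
  assumes R: "semi_bisim x y R" and ss': "tau_steps tr tau s s'" and "R s t"
  obtains t' where "tau_steps tr tau t t'" "R s' t'"
proof -
  from ss'[unfolded tau_steps_def] have "\<exists>t'. tau_steps tr tau t t' \<and> R s' t'"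
  proof (induction rule: rtranclp_induct)
    case base
    then show ?case
      using \<open>R s t\<close> by (blast intro: tau_steps_refl)
  next
    case (step u u')
    then obtain t1 where t1: "tau_steps tr tau t t1" "R u t1"
      by blast
    from R t1(2) \<open>tr u tau u'\<close> show ?case
    proof (cases rule: semi_bisimE)
      case (tau t2)
      then show ?thesis
        using tau_steps_trans[OF t1(1) mstep_tau_steps[OF tau(2)]] by blast
    next
      case (step t' t2 t3)
      have "tau_steps tr tau t1 t3"
        using mstep_tau_steps[OF step(1)] tau_steps_step[OF step(2)] by (rule tau_steps_trans)
      then have "tau_steps tr tau t t'"
        using t1(1) mstep_tau_steps[OF step(3)] tau_steps_trans by metis
      then show ?thesis
        using step(4) by blast
    qed
  qed
  then show thesis
    using that by blast
qed

lemma semi_bisim_relcompp: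
  assumes R: "semi_bisim x y R"
  shows "semi_bisim x y (R OO R)"
proof (rule semi_bisimI)
  show "symp (R OO R)"
    using semi_bisim_sym[OF R] by (blast intro: sympI)
next
  fix s t a s'
  assume "(R OO R) s t" and tr: "tr s a s'"
  then obtain u where su: "R s u" and ut: "R u t" by blast
  from R su tr show "(a = tau \<and> (\<exists>t1. mstep tr tau x (R OO R) s t t1 \<and> (R OO R) s' t1)) \<or>
    (\<exists>t' t1 t2. mstep tr tau x (R OO R) s t t1 \<and> tr t1 a t2 \<and>
       mstep tr tau y (R OO R) s' t2 t' \<and> (R OO R) s' t')"
  proof (cases rule: semi_bisimE)
    case (tau u1)
    obtain t1 where "tau_steps tr tau t t1" "R u1 t1"
      using semi_bisim_tau_steps[OF R mstep_tau_steps[OF tau(2)] ut] .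
    then show ?thesis
      using tau ut by (blast intro: mstep_relcompp)
  next
    case (step u' u1 u2)
    obtain t1 where tt1: "tau_steps tr tau t t1" and u1t1: "R u1 t1"
      using semi_bisim_tau_steps[OF R mstep_tau_steps[OF step(1)] ut] .
    from R u1t1 step(2) show ?thesis
    proof (cases rule: semi_bisimE)
      case (tau t2)
      have tt2: "tau_steps tr tau t t2"
        using tt1 mstep_tau_steps[OF tau(2)] by (rule tau_steps_trans)
      have x_answer: "mstep tr tau x (R OO R) s t t2"
        using mstep_relcompp[OF step(1) tt2] ut tau(2) by (cases x) auto
      show ?thesis
      proof (cases y)
        case Mb
        then have "(R OO R) s' t2"
          using step(3) tau(3) by auto
        then show ?thesis
          using x_answer tau(1) by blast
      next
        case Mo
        obtain t' where t2t': "tau_steps tr tau t2 t'" and "R u' t'"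
          using semi_bisim_tau_steps[OF R mstep_tau_steps[OF step(3)] tau(3)] .
        then have s't': "(R OO R) s' t'"
          using step(4) by blast
        \<comment> \<open>an empty path answers with the \<open>\<tau>\<close>-clause, a non-empty one with its first step\<close>
        from t2t'[unfolded tau_steps_def] show ?thesis
        proof (cases rule: converse_rtranclpE)
          case base
          then show ?thesis
            using x_answer s't' tau(1) by blast
        next
          case (step t3)
          then have "mstep tr tau y (R OO R) s' t3 t'"
            using Mo by (simp add: tau_steps_def)
          then show ?thesis
            using x_answer s't' tau(1) step(1) by blast
        qed
      qed
    next
      case (step t' t2 t3)
      obtain t'' where t't'': "tau_steps tr tau t' t''" and u't'': "R u' t''"
        using semi_bisim_tau_steps[OF R mstep_tau_steps[OF \<open>mstep tr tau y R s' u2 u'\<close>] step(4)] .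
      have tt2: "tau_steps tr tau t t2"
        using tt1 mstep_tau_steps[OF step(1)] by (rule tau_steps_trans)
      have t3t'': "tau_steps tr tau t3 t''"
        using mstep_tau_steps[OF step(3)] t't'' by (rule tau_steps_trans)
      have "mstep tr tau x (R OO R) s t t2"
        using mstep_relcompp[OF \<open>mstep tr tau x R s u u1\<close> tt2] ut step(1) by (cases x) auto
      moreover have "mstep tr tau y (R OO R) s' t3 t''"
        using mstep_relcompp[OF \<open>mstep tr tau y R s' u2 u'\<close> t3t''] u't'' step(3) by (cases y) auto
      moreover have "(R OO R) s' t''"
        using \<open>R s' u'\<close> u't'' by blast
      ultimately show ?thesis
        using step(2) by blast
    qed
  qed
qed

lemma semi_bisimilarI: "semi_bisim x y R \<Longrightarrow> R s t \<Longrightarrow> semi_bisimilar x y s t"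
  unfolding semi_bisimilar_def by blast

lemma semi_bisim_semi_bisimilar: "semi_bisim x y (semi_bisimilar x y)"
proof (rule semi_bisimI)
  show "symp (semi_bisimilar x y)"
  proof (rule sympI)
    fix s t
    assume "semi_bisimilar x y s t"
    then obtain R where "semi_bisim x y R" "R s t"
      unfolding semi_bisimilar_def by blast
    then show "semi_bisimilar x y t s"
      by (blast intro: semi_bisimilarI semi_bisim_sym)
  qed
next
  fix s t a s'
  assume "semi_bisimilar x y s t" and tr: "tr s a s'"
  then obtain R where R: "semi_bisim x y R" and "R s t"
    unfolding semi_bisimilar_def by blast
  have le: "R \<le> semi_bisimilar x y"
    by (rule predicate2I) (rule semi_bisimilarI[OF R])
  from R \<open>R s t\<close> tr show "(a = tau \<and> (\<exists>t1. mstep tr tau x (semi_bisimilar x y) s t t1 \<and>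
      semi_bisimilar x y s' t1)) \<or>
    (\<exists>t' t1 t2. mstep tr tau x (semi_bisimilar x y) s t t1 \<and> tr t1 a t2 \<and>
       mstep tr tau y (semi_bisimilar x y) s' t2 t' \<and> semi_bisimilar x y s' t')"
  proof (cases rule: semi_bisimE)
    case (tau t1)
    then show ?thesis
      using mstep_mono[OF tau(2) le] le by blast
  next
    case (step t' t1 t2)
    then show ?thesis
      using mstep_mono[OF step(1) le] mstep_mono[OF step(3) le] le by blast
  qed
qed

lemma semi_bisimilar_refl: "semi_bisimilar x y s s"
proof (rule semi_bisimilarI)
  show "semi_bisim x y (=)"
  proof (rule semi_bisimI)
    fix t u a u'
    assume "t = u" "tr t a u'"
    then show "(a = tau \<and> (\<exists>t1. mstep tr tau x (=) t u t1 \<and> u' = t1)) \<or>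
      (\<exists>t' t1 t2. mstep tr tau x (=) t u t1 \<and> tr t1 a t2 \<and> mstep tr tau y (=) u' t2 t' \<and> u' = t')"
      by (blast intro: mstepI tau_steps_refl)
  qed (rule sympI, simp)
qed (rule refl)

lemma semi_bisimilar_sym: "semi_bisimilar x y s t \<Longrightarrow> semi_bisimilar x y t s"
  by (rule semi_bisim_sym[OF semi_bisim_semi_bisimilar])

lemma semi_bisimilar_trans:
  "semi_bisimilar x y s u \<Longrightarrow> semi_bisimilar x y u t \<Longrightarrow> semi_bisimilar x y s t"
  by (rule semi_bisimilarI[OF semi_bisim_relcompp[OF semi_bisim_semi_bisimilar]]) (rule relcomppI)

lemma semi_bisim_tau_closure:
  assumes S: "semi_bisim x y S"
  shows "semi_bisim x y (\<lambda>p q. (\<exists>q'. tau_steps tr tau q q' \<and> S p q') \<and>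
                                 (\<exists>p'. tau_steps tr tau p p' \<and> S q p'))"
    (is "semi_bisim x y ?R")
proof (rule semi_bisimI)
  show "symp ?R"
    by (blast intro: sympI)
next
  have le: "S \<le> ?R"
    using semi_bisim_sym[OF S] by (blast intro: predicate2I tau_steps_refl)
  fix p q a p'
  assume pq: "?R p q" and tr: "tr p a p'"
  then obtain q' where qq': "tau_steps tr tau q q'" and "S p q'"
    by blast
  from S \<open>S p q'\<close> tr show "(a = tau \<and> (\<exists>t1. mstep tr tau x ?R p q t1 \<and> ?R p' t1)) \<or>
    (\<exists>t' t1 t2. mstep tr tau x ?R p q t1 \<and> tr t1 a t2 \<and> mstep tr tau y ?R p' t2 t' \<and> ?R p' t')"
  proof (cases rule: semi_bisimE)
    case (tau t1)
    have "mstep tr tau x ?R p q t1"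
      using pq le mstep_Mb_related[of S p q' t1] tau(2)
      by (intro mstepI tau_steps_trans[OF qq' mstep_tau_steps[OF tau(2)]]) blast
    then show ?thesis
      using tau le by blast
  next
    case (step t' t1 t2)
    have "mstep tr tau x ?R p q t1"
      using pq le mstep_Mb_related[of S p q' t1] step(1)
      by (intro mstepI tau_steps_trans[OF qq' mstep_tau_steps[OF step(1)]]) blast
    then show ?thesis
      using step le mstep_mono[OF step(3) le] by blast
  qed
qed

lemma semi_bisimilar_stutter:
  assumes "semi_bisimilar x y s t" "tau_steps tr tau t u" "tau_steps tr tau u t'"
    and "semi_bisimilar x y s t'"
  shows "semi_bisimilar x y s u"
proof (rule semi_bisimilarI[OF semi_bisim_tau_closure[OF semi_bisim_semi_bisimilar]])
  obtain s' where "tau_steps tr tau s s'" "semi_bisimilar x y u s'"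
    using semi_bisim_tau_steps[OF semi_bisim_semi_bisimilar assms(2)
        semi_bisimilar_sym[OF assms(1)]] .
  then show "(\<exists>u'. tau_steps tr tau u u' \<and> semi_bisimilar x y s u') \<and>
    (\<exists>s'. tau_steps tr tau s s' \<and> semi_bisimilar x y u s')"
    using assms(3,4) by blast
qed

lemma generic_bisim_semi_bisimilar: "generic_bisim tr tau x y (semi_bisimilar x y)"
  unfolding generic_bisim_def
proof (intro conjI allI impI)
  show "symp (semi_bisimilar x y)"
    by (rule sympI) (rule semi_bisimilar_sym)
next
  let ?S = "semi_bisimilar x y"
  fix s t a s'
  assume "?S s t \<and> tr s a s'"
  then have st: "?S s t" and tr: "tr s a s'"
    by simp_all
  from semi_bisim_semi_bisimilar st tr show "(a = tau \<and> ?S s' t) \<or>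
    (\<exists>t' t1 t2. mstep tr tau x ?S s t t1 \<and> tr t1 a t2 \<and> mstep tr tau y ?S s' t2 t' \<and> ?S s' t')"
  proof (cases rule: semi_bisimE)
    case (tau t1)
    from mstep_tau_steps[OF tau(2)] show ?thesis
      unfolding tau_steps_def
    proof (cases rule: rtranclp.cases)
      case rtrancl_refl
      then show ?thesis
        using tau by blast
    next
      \<comment> \<open>the last \<open>\<tau>\<close>-step of the path is the matching step\<close>
      case (rtrancl_into_rtrancl t0)
      then have tt0: "tau_steps tr tau t t0" and t0t1: "tau_steps tr tau t0 t1"
        by (simp_all add: tau_steps_def r_into_rtranclp)
      have "mstep tr tau x ?S s t t0"
      proof (rule mstepI[OF tt0])
        assume "x = Mb"
        then have "?S s t" "?S s t1"
          using tau(2) by simp_all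
        then show "?S s t \<and> ?S s t0"
          using semi_bisimilar_stutter[OF _ tt0 t0t1] by blast
      qed
      moreover have "mstep tr tau y ?S s' t1 t1"
        using tau(3) by (intro mstepI tau_steps_refl) simp
      ultimately show ?thesis
        using tau rtrancl_into_rtrancl(2) by blast
    qed
  next
    case step
    then show ?thesis
      by blast
  qed
qed

lemma generic_bisim_imp_semi_bisim: "generic_bisim tr tau x y R \<Longrightarrow> semi_bisim x y R"
  unfolding generic_bisim_def semi_bisim_def
  by (blast intro: mstepI tau_steps_refl)

lemma generic_bisimilar_eq_semi_bisimilar: "generic_bisimilar tr tau x y = semi_bisimilar x y"
proof (intro ext iffI)
  fix s t
  assume "generic_bisimilar tr tau x y s t"
  then obtain R where "generic_bisim tr tau x y R" "R s t"
    unfolding generic_bisimilar_def by blast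
  then show "semi_bisimilar x y s t"
    by (rule semi_bisimilarI[OF generic_bisim_imp_semi_bisim])
next
  fix s t
  assume "semi_bisimilar x y s t"
  then show "generic_bisimilar tr tau x y s t"
    unfolding generic_bisimilar_def using generic_bisim_semi_bisimilar by blast
qed

end

theorem corollary4p7:
  fixes tr :: "'s \<Rightarrow> 'a \<Rightarrow> 's \<Rightarrow> bool" and tau :: 'a and x y :: mode
  shows "equivp (generic_bisimilar tr tau x y)"
  unfolding generic_bisimilar_eq_semi_bisimilar
proof (rule equivpI)
  show "reflp (semi_bisimilar tr tau x y)"
    by (rule reflpI) (rule semi_bisimilar_refl)
  show "symp (semi_bisimilar tr tau x y)"
    by (rule sympI) (rule semi_bisimilar_sym)
  show "transp (semi_bisimilar tr tau x y)"
    by (rule transpI) (rule semi_bisimilar_trans)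
qed

end
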